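(* Let $A$ be a $\delta$-algebra, let $C_1,\dots,C_n$ be pairwise disjoint closed subsets of $\mathrm{Max}\,A$, and let $r_1,\dots,r_n\in[0,1]$. Then there exists $a\in A$ such that $\hat a(h)=r_i$ for every $i\in\{1,\dots,n\}$ and every $h\in C_i$.
   Context: An MV-algebra is an algebra $(A,\oplus,\neg,0)$ of type $(2,1,0)$ such that $(A,\oplus,0)$ is a commutative monoid, $\neg\neg a=a$, $a\oplus\neg 0=\neg 0$, and $\neg(\neg a\oplus b)\oplus b=\neg(\neg b\oplus a)\oplus a$. Derived operations: $1:=\neg 0$, $a\odot b:=\neg(\neg a\oplus\neg b)$, $a\ominus b:=a\odot\neg b$, $a\vee b:=\neg(\neg a\oplus b)\oplus b$ (join of a lattice order $\le$), $d(a,b):=(a\ominus b)\oplus(b\ominus a)$. Let $\mathcal{L}=\{\delta,\oplus,\neg,0\}$ of type $(\omega,2,1,0)$; $\tfrac12(x):=\delta(x,0,0,\dots)$. A $\delta$-algebra is an $\mathcal{L}$-algebra whose MV-reduct is an MV-algebra and satisfying for all $x,y,\vec x,\vec y$: (i) $d(\delta(\vec x),\delta(x_1,0,0,\dots))=\delta(0,x_2,x_3,\dots)$; (ii) $\tfrac12(\delta(\vec x))=\delta(\tfrac12(x_1),\tfrac12(x_2),\dots)$; (iii) $\delta(x,x,\dots)=x$; (iv) $\delta(0,\vec x)=\tfrac12(\delta(\vec x))$; (v) $\delta(\vec x)\le\delta(x_1\oplus y_1,x_2\oplus y_2,\dots)$; (vi) $\tfrac12(x\ominus y)=\tfrac12(x)\ominus\tfrac12(y)$.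 $[0,1]$ is the standard $\delta$-algebra with $x\oplus y=\min\{1,x+y\}$, $\neg x=1-x$, $\delta(\vec x)=\sum_i x_i/2^i$. For a $\delta$-algebra $A$, $\mathrm{Max}\,A$ is the set of MV-algebra homomorphisms $A\to[0,1]$ with the subspace topology of the product space $[0,1]^A$ (a compact Hausdorff space). For $a\in A$, $\hat a\colon\mathrm{Max}\,A\to[0,1]$ is the continuous map $\hat a(h):=h(a)$. *)

theory Defs
  imports "HOL-Analysis.Analysis"
begin

text \<open>An algebra of type (omega,2,1,0) is given by its operations on a type 'a
  (the carrier is the whole type).  Infinite sequences x_1, x_2, ... are
  represented as functions nat => 'a with x_1 at index 0.\<close>

definition mv_algebra :: "('a \<Rightarrow> 'a \<Rightarrow> 'a) \<Rightarrow> ('a \<Rightarrow> 'a) \<Rightarrow> 'a \<Rightarrow> bool" where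
  "mv_algebra pl ng z \<longleftrightarrow>
     (\<forall>a b c. pl (pl a b) c = pl a (pl b c)) \<and>
     (\<forall>a b. pl a b = pl b a) \<and>
     (\<forall>a. pl a z = a) \<and>
     (\<forall>a. ng (ng a) = a) \<and>
     (\<forall>a. pl a (ng z) = ng z) \<and>
     (\<forall>a b. pl (ng (pl (ng a) b)) b = pl (ng (pl (ng b) a)) a)"

definition mv_odot :: "('a \<Rightarrow> 'a \<Rightarrow> 'a) \<Rightarrow> ('a \<Rightarrow> 'a) \<Rightarrow> 'a \<Rightarrow> 'a \<Rightarrow> 'a" where
  "mv_odot pl ng a b = ng (pl (ng a) (ng b))"

definition mv_ominus :: "('a \<Rightarrow> 'a \<Rightarrow> 'a) \<Rightarrow> ('a \<Rightarrow> 'a) \<Rightarrow> 'a \<Rightarrow> 'a \<Rightarrow> 'a" where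
  "mv_ominus pl ng a b = mv_odot pl ng a (ng b)"

definition mv_join :: "('a \<Rightarrow> 'a \<Rightarrow> 'a) \<Rightarrow> ('a \<Rightarrow> 'a) \<Rightarrow> 'a \<Rightarrow> 'a \<Rightarrow> 'a" where
  "mv_join pl ng a b = pl (ng (pl (ng a) b)) b"

definition mv_le :: "('a \<Rightarrow> 'a \<Rightarrow> 'a) \<Rightarrow> ('a \<Rightarrow> 'a) \<Rightarrow> 'a \<Rightarrow> 'a \<Rightarrow> bool" where
  "mv_le pl ng a b \<longleftrightarrow> mv_join pl ng a b = b"

definition mv_dist :: "('a \<Rightarrow> 'a \<Rightarrow> 'a) \<Rightarrow> ('a \<Rightarrow> 'a) \<Rightarrow> 'a \<Rightarrow> 'a \<Rightarrow> 'a" where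
  "mv_dist pl ng a b = pl (mv_ominus pl ng a b) (mv_ominus pl ng b a)"

definition dhalf :: "((nat \<Rightarrow> 'a) \<Rightarrow> 'a) \<Rightarrow> 'a \<Rightarrow> 'a \<Rightarrow> 'a" where
  "dhalf dl z x = dl (\<lambda>i. if i = 0 then x else z)"

definition delta_algebra ::
  "((nat \<Rightarrow> 'a) \<Rightarrow> 'a) \<Rightarrow> ('a \<Rightarrow> 'a \<Rightarrow> 'a) \<Rightarrow> ('a \<Rightarrow> 'a) \<Rightarrow> 'a \<Rightarrow> bool" where
  "delta_algebra dl pl ng z \<longleftrightarrow>
     mv_algebra pl ng z \<and>
     (\<forall>x. mv_dist pl ng (dl x) (dl (\<lambda>i. if i = 0 then x 0 else z))
            = dl (\<lambda>i. if i = 0 then z else x i)) \<and>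
     (\<forall>x. dhalf dl z (dl x) = dl (\<lambda>i. dhalf dl z (x i))) \<and>
     (\<forall>x. dl (\<lambda>i. x) = x) \<and>
     (\<forall>x. dl (\<lambda>i. if i = 0 then z else x (i - 1)) = dhalf dl z (dl x)) \<and>
     (\<forall>x y. mv_le pl ng (dl x) (dl (\<lambda>i. pl (x i) (y i)))) \<and>
     (\<forall>x y. dhalf dl z (mv_ominus pl ng x y)
            = mv_ominus pl ng (dhalf dl z x) (dhalf dl z y))"

text \<open>Max A: MV-algebra homomorphisms into the standard MV-algebra [0,1].
  It carries the subspace topology of the product topology on 'a => real
  (the product topology on [0,1]^A is the subspace topology of real^A).\<close>
definition MaxSpec :: "('a \<Rightarrow> 'a \<Rightarrow> 'a) \<Rightarrow> ('a \<Rightarrow> 'a) \<Rightarrow> 'a \<Rightarrow> ('a \<Rightarrow> real) set" where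
  "MaxSpec pl ng z = {h. (\<forall>a. h a \<in> {0..1}) \<and> h z = 0 \<and>
     (\<forall>a. h (ng a) = 1 - h a) \<and> (\<forall>a b. h (pl a b) = min 1 (h a + h b))}"

end

theory Submission
  imports Defs
begin

text \<open>Elements of an MV-algebra realise, on the maximal spectrum, the truncated dyadic dilations
  \<open>x \<mapsto> max 0 (min 1 (2^N x - c))\<close>; hence two distinct points of \<open>Max A\<close> are separated by an
  element that is 0 near one and 1 near the other.  Compactness of \<open>Max A\<close> together with finite
  \<open>\<odot>\<close>- and \<open>\<oplus>\<close>-combinations upgrades this to a Urysohn lemma: disjoint closed sets are separated
  by an element that is 0 on one and 1 on the other.  In a \<open>\<delta>\<close>-algebra every point evaluates
  \<open>\<delta>(x)\<close> as the binary series \<open>\<Sum> h(x\<^sub>k)/2\<^sup>k\<^sup>+\<^sup>1\<close>, so feeding \<open>\<delta>\<close> a Urysohn element at the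
  binary digits of \<open>r\<close> (and 0 elsewhere) scales its values by \<open>r\<close>.  The required element is the
  \<open>\<oplus>\<close>-sum of these scaled separating elements, one for each \<open>C\<^sub>i\<close>.\<close>

lemma MaxSpecD:
  assumes "h \<in> MaxSpec pl ng z"
  shows "0 \<le> h a" "h a \<le> 1" "h z = 0" "h (ng a) = 1 - h a" "h (pl a b) = min 1 (h a + h b)"
  using assms unfolding MaxSpec_def by auto

lemma MaxSpec_odot:
  assumes "h \<in> MaxSpec pl ng z"
  shows "h (mv_odot pl ng a b) = max 0 (h a + h b - 1)"
  using MaxSpecD[OF assms] unfolding mv_odot_def by (simp add: min_def max_def)

lemma MaxSpec_ominus:
  assumes "h \<in> MaxSpec pl ng z"
  shows "h (mv_ominus pl ng a b) = max 0 (h a - h b)"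
  using MaxSpecD[OF assms] unfolding mv_ominus_def mv_odot_def by (simp add: min_def max_def)

lemma MaxSpec_dist:
  assumes "h \<in> MaxSpec pl ng z"
  shows "h (mv_dist pl ng a b) = \<bar>h a - h b\<bar>"
proof -
  have "h (mv_dist pl ng a b) = min 1 (max 0 (h a - h b) + max 0 (h b - h a))"
    unfolding mv_dist_def by (simp add: MaxSpecD[OF assms] MaxSpec_ominus[OF assms])
  then show ?thesis using MaxSpecD(1,2)[OF assms, of a] MaxSpecD(1,2)[OF assms, of b]
    by (simp add: min_def max_def abs_if)
qed

lemma MaxSpec_join:
  assumes "h \<in> MaxSpec pl ng z"
  shows "h (mv_join pl ng a b) = max (h a) (h b)"
proof -
  have "h (mv_join pl ng a b) = min 1 (1 - min 1 (1 - h a + h b) + h b)"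
    unfolding mv_join_def by (simp add: MaxSpecD(3-5)[OF assms])
  then show ?thesis using MaxSpecD(1,2)[OF assms, of a] MaxSpecD(1,2)[OF assms, of b]
    by (simp add: min_def max_def)
qed

lemma MaxSpec_le:
  assumes "h \<in> MaxSpec pl ng z" "mv_le pl ng a b"
  shows "h a \<le> h b"
  using MaxSpec_join[OF assms(1), of a b] assms(2) by (simp add: mv_le_def)

lemma MaxSpec_exists_sum:
  assumes "finite I"
  shows "\<exists>a. \<forall>h\<in>MaxSpec pl ng z. h a = min 1 (\<Sum>i\<in>I. h (f i))"
  using assms
proof (induction I rule: finite_induct)
  case empty
  show ?case by (intro exI[of _ z]) (simp add: MaxSpecD)
next
  case (insert j I)
  then obtain a where a: "\<forall>h\<in>MaxSpec pl ng z. h a = min 1 (\<Sum>i\<in>I. h (f i))" by blast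
  show ?case
  proof (intro exI[of _ "pl (f j) a"] ballI)
    fix h assume h: "h \<in> MaxSpec pl ng z"
    have "0 \<le> h (f j)" "0 \<le> (\<Sum>i\<in>I. h (f i))"
      using MaxSpecD(1)[OF h] by (auto intro: sum_nonneg)
    moreover have "h a = min 1 (\<Sum>i\<in>I. h (f i))" using a h by blast
    ultimately show "h (pl (f j) a) = min 1 (\<Sum>i\<in>insert j I. h (f i))"
      using insert.hyps by (simp add: MaxSpecD(5)[OF h])
  qed
qed

lemma MaxSpec_exists_join01:
  assumes "finite I"
  shows "\<exists>a. \<forall>h\<in>MaxSpec pl ng z.
    ((\<exists>i\<in>I. h (f i) = 1) \<longrightarrow> h a = 1) \<and> ((\<forall>i\<in>I. h (f i) = 0) \<longrightarrow> h a = 0)"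
proof -
  obtain a where a: "\<forall>h\<in>MaxSpec pl ng z. h a = min 1 (\<Sum>i\<in>I. h (f i))"
    using MaxSpec_exists_sum[OF assms, of pl ng z f] by blast
  show ?thesis
  proof (intro exI[of _ a] ballI conjI impI)
    fix h assume h: "h \<in> MaxSpec pl ng z"
    then have ha: "h a = min 1 (\<Sum>i\<in>I. h (f i))" using a by blast
    show "h a = 1" if one: "\<exists>i\<in>I. h (f i) = 1"
    proof -
      obtain i where "i \<in> I" "h (f i) = 1" using one by blast
      then have "1 \<le> (\<Sum>i\<in>I. h (f i))"
        using assms MaxSpecD(1)[OF h] member_le_sum[of i I "\<lambda>i. h (f i)"] by simp
      then show ?thesis using ha by simp
    qed
    show "h a = 0" if "\<forall>i\<in>I. h (f i) = 0"
      using that ha by simp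
  qed
qed

lemma MaxSpec_exists_meet01:
  assumes "finite I"
  shows "\<exists>a. \<forall>h\<in>MaxSpec pl ng z.
    ((\<exists>i\<in>I. h (f i) = 0) \<longrightarrow> h a = 0) \<and> ((\<forall>i\<in>I. h (f i) = 1) \<longrightarrow> h a = 1)"
proof -
  obtain a where a: "\<forall>h\<in>MaxSpec pl ng z.
      ((\<exists>i\<in>I. h (ng (f i)) = 1) \<longrightarrow> h a = 1) \<and> ((\<forall>i\<in>I. h (ng (f i)) = 0) \<longrightarrow> h a = 0)"
    using MaxSpec_exists_join01[OF assms, of pl ng z "\<lambda>i. ng (f i)"] by blast
  show ?thesis
    by (intro exI[of _ "ng a"]) (use a in \<open>auto simp: MaxSpecD(4)\<close>)
qed

text \<open>Doubling is realised by \<open>b \<oplus> b\<close> and doubling minus one by \<open>b \<odot> b\<close>, so a dilation by \<open>2^N\<close>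
  with integer offset \<open>c\<close> is built from the binary digits of \<open>c\<close>, most significant first.\<close>

lemma clamp01_double:
  fixes y :: real
  shows "min 1 (max 0 (min 1 y) + max 0 (min 1 y)) = max 0 (min 1 (2 * y))"
    and "max 0 (max 0 (min 1 y) + max 0 (min 1 y) - 1) = max 0 (min 1 (2 * y - 1))"
  by (simp_all add: min_def max_def)

lemma MaxSpec_exists_dilation:
  "c < 2^N \<Longrightarrow> \<exists>b. \<forall>h\<in>MaxSpec pl ng z. h b = max 0 (min 1 (2^N * h a - real c))"
proof (induction N arbitrary: c)
  case 0
  then show ?case using MaxSpecD(1,2) by (intro exI[of _ a]) fastforce
next
  case (Suc N)
  have "c div 2 < 2^N" using Suc.prems by auto
  then obtain b where b: "\<forall>h\<in>MaxSpec pl ng z. h b = max 0 (min 1 (2^N * h a - real (c div 2)))"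
    using Suc.IH by blast
  have c: "real c = 2 * real (c div 2) + real (c mod 2)"
    by (metis div_mult_mod_eq mult.commute of_nat_add of_nat_mult of_nat_numeral)
  show ?case
  proof (cases "c mod 2 = 0")
    case True
    show ?thesis
    proof (intro exI[of _ "pl b b"] ballI)
      fix h assume h: "h \<in> MaxSpec pl ng z"
      have e: "2^Suc N * h a - real c = 2 * (2^N * h a - real (c div 2))" using c True by simp
      show "h (pl b b) = max 0 (min 1 (2^Suc N * h a - real c))"
        unfolding MaxSpecD(5)[OF h] b[rule_format, OF h] e by (rule clamp01_double(1))
    qed
  next
    case False
    then have "c mod 2 = 1" by simp
    show ?thesis
    proof (intro exI[of _ "mv_odot pl ng b b"] ballI)
      fix h assume h: "h \<in> MaxSpec pl ng z"
      have e: "2^Suc N * h a - real c = 2 * (2^N * h a - real (c div 2)) - 1"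
        using c \<open>c mod 2 = 1\<close> by simp
      show "h (mv_odot pl ng b b) = max 0 (min 1 (2^Suc N * h a - real c))"
        unfolding MaxSpec_odot[OF h] b[rule_format, OF h] e by (rule clamp01_double(2))
    qed
  qed
qed

lemma open_Collect_coordinate_less:
  "open {h :: 'a \<Rightarrow> real. s * h a < t}" "open {h :: 'a \<Rightarrow> real. t < s * h a}"
  by (intro open_Collect_less continuous_on_mult continuous_on_const
      continuous_on_product_coordinates)+

definition separating_element ::
  "('a \<Rightarrow> 'a \<Rightarrow> 'a) \<Rightarrow> ('a \<Rightarrow> 'a) \<Rightarrow> 'a \<Rightarrow> 'a \<Rightarrow> ('a \<Rightarrow> real) set \<Rightarrow> ('a \<Rightarrow> real) set \<Rightarrow> bool"
where
  "separating_element pl ng z b U V \<longleftrightarrow> open U \<and> open V \<and>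
     (\<forall>h\<in>U \<inter> MaxSpec pl ng z. h b = 0) \<and> (\<forall>h\<in>V \<inter> MaxSpec pl ng z. h b = 1)"

lemma MaxSpec_separate_less:
  assumes h: "h \<in> MaxSpec pl ng z" and g: "g \<in> MaxSpec pl ng z" and lt: "h a < g a"
  shows "\<exists>b U V. h \<in> U \<and> g \<in> V \<and> separating_element pl ng z b U V"
proof -
  obtain N where N: "3 / (g a - h a) < (2::real)^N" using real_arch_pow[of 2] by auto
  then have gap: "3 < 2^N * g a - 2^N * h a" using lt by (simp add: field_simps)
  define c where "c = nat \<lfloor>2^N * h a\<rfloor> + 1"
  have "0 \<le> 2^N * h a" using MaxSpecD(1)[OF h] by simp
  then have c: "2^N * h a < real c" "real c \<le> 2^N * h a + 1"
    unfolding c_def by linarith+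
  have "2^N * g a \<le> 2^N" using MaxSpecD(2)[OF g] by simp
  then have "real c < 2^N" using c gap by linarith
  then have "c < 2^N" by (metis of_nat_less_iff of_nat_numeral of_nat_power)
  then obtain b where b: "\<forall>h\<in>MaxSpec pl ng z. h b = max 0 (min 1 (2^N * h a - real c))"
    using MaxSpec_exists_dilation[of c N pl ng z a] by blast
  let ?U = "{h'. 2^N * h' a < real c}" and ?V = "{h'. real c + 1 < 2^N * h' a}"
  have "h \<in> ?U" "g \<in> ?V" using c gap by auto
  moreover have "\<forall>h'\<in>?U \<inter> MaxSpec pl ng z. h' b = 0" "\<forall>h'\<in>?V \<inter> MaxSpec pl ng z. h' b = 1"
  proof safe
    fix h' assume "h' \<in> MaxSpec pl ng z"
    then have "h' b = max 0 (min 1 (2^N * h' a - real c))" using b by blast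
    then show "2^N * h' a < real c \<Longrightarrow> h' b = 0" "real c + 1 < 2^N * h' a \<Longrightarrow> h' b = 1"
      by simp_all
  qed
  moreover have "open ?U" "open ?V" by (fact open_Collect_coordinate_less)+
  ultimately show ?thesis
    unfolding separating_element_def by (intro exI[of _ b] exI[of _ ?U] exI[of _ ?V] conjI)
qed

lemma MaxSpec_separate_points:
  assumes h: "h \<in> MaxSpec pl ng z" and g: "g \<in> MaxSpec pl ng z" and "h \<noteq> g"
  shows "\<exists>b U V. h \<in> U \<and> g \<in> V \<and> separating_element pl ng z b U V"
proof -
  obtain a where a: "h a \<noteq> g a" using \<open>h \<noteq> g\<close> by (auto simp: fun_eq_iff)
  then consider "h a < g a" | "h (ng a) < g (ng a)"
    using MaxSpecD(4)[OF h] MaxSpecD(4)[OF g] by fastforce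
  then show ?thesis by cases (use MaxSpec_separate_less[OF h g] in blast)+
qed

lemma closed_MaxSpec: "closed (MaxSpec pl ng z)"
proof -
  have "MaxSpec pl ng z = {h. \<forall>a. 0 \<le> h a} \<inter> {h. \<forall>a. h a \<le> 1} \<inter> {h. h z = 0} \<inter>
      {h. \<forall>a. h (ng a) = 1 - h a} \<inter> {h. \<forall>a b. h (pl a b) = min 1 (h a + h b)}"
    unfolding MaxSpec_def by auto
  also have "closed \<dots>"
    by (intro closed_Int closed_Collect_all closed_Collect_le closed_Collect_eq continuous_on_min
        continuous_on_add continuous_on_diff continuous_on_const continuous_on_product_coordinates)
  finally show ?thesis .
qed

lemma compact_MaxSpec: "compact (MaxSpec pl ng z)"
proof -
  have "compactin (product_topology (\<lambda>_. euclidean) UNIV) (PiE UNIV (\<lambda>_::'a. {0..1::real}))"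
    by (simp add: compactin_PiE)
  then have "compact (PiE UNIV (\<lambda>_::'a. {0..1::real}))"
    by (simp add: euclidean_product_topology compactin_euclidean_iff)
  moreover have "MaxSpec pl ng z = PiE UNIV (\<lambda>_. {0..1}) \<inter> MaxSpec pl ng z"
    unfolding MaxSpec_def by (auto simp: PiE_def Pi_def)
  ultimately show ?thesis using closed_MaxSpec by (metis compact_Int_closed)
qed

lemma MaxSpec_separate_compact_point:
  assumes "compact C" "C \<subseteq> MaxSpec pl ng z" "g \<in> MaxSpec pl ng z" "g \<notin> C"
  shows "\<exists>b U V. C \<subseteq> U \<and> g \<in> V \<and> separating_element pl ng z b U V"
proof -
  let ?M = "MaxSpec pl ng z"
  have "\<forall>h\<in>C. \<exists>b U V. h \<in> U \<and> g \<in> V \<and> separating_element pl ng z b U V"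
    using assms MaxSpec_separate_points by (metis subsetD)
  then obtain b U V where sep: "\<And>h. h \<in> C \<Longrightarrow>
      h \<in> U h \<and> g \<in> V h \<and> separating_element pl ng z (b h) (U h) (V h)"
    by metis
  obtain T where T: "T \<subseteq> C" "finite T" "C \<subseteq> (\<Union>t\<in>T. U t)"
    using compactE_image[OF assms(1), of C U] sep unfolding separating_element_def by blast
  obtain a where a: "\<forall>h\<in>?M.
      ((\<exists>t\<in>T. h (b t) = 0) \<longrightarrow> h a = 0) \<and> ((\<forall>t\<in>T. h (b t) = 1) \<longrightarrow> h a = 1)"
    using MaxSpec_exists_meet01[OF T(2), of pl ng z b] by blast
  have "open (U t)" "open (V t)" "\<forall>h\<in>U t \<inter> ?M. h (b t) = 0" "\<forall>h\<in>V t \<inter> ?M. h (b t) = 1"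
    if "t \<in> T" for t
    using sep that T(1) unfolding separating_element_def by blast+
  note sepD = this
  have "\<forall>h\<in>(\<Union>t\<in>T. U t) \<inter> ?M. h a = 0"
  proof
    fix h assume "h \<in> (\<Union>t\<in>T. U t) \<inter> ?M"
    then obtain t where "t \<in> T" "h \<in> U t" "h \<in> ?M" by blast
    then show "h a = 0" using sepD(3) a by blast
  qed
  moreover have "\<forall>h\<in>(\<Inter>t\<in>T. V t) \<inter> ?M. h a = 1" using sepD(4) a by blast
  ultimately have "separating_element pl ng z a (\<Union>t\<in>T. U t) (\<Inter>t\<in>T. V t)"
    unfolding separating_element_def using T(2) sepD(1,2) by auto
  moreover have "g \<in> (\<Inter>t\<in>T. V t)" using T sep by blast
  ultimately show ?thesis using T(3) by blast
qed

lemma MaxSpec_separate_compact: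
  assumes "compact C" "C \<subseteq> MaxSpec pl ng z" "compact D" "D \<subseteq> MaxSpec pl ng z" "C \<inter> D = {}"
  shows "\<exists>b U V. C \<subseteq> U \<and> D \<subseteq> V \<and> separating_element pl ng z b U V"
proof -
  let ?M = "MaxSpec pl ng z"
  have "\<forall>g\<in>D. \<exists>b U V. C \<subseteq> U \<and> g \<in> V \<and> separating_element pl ng z b U V"
    using assms MaxSpec_separate_compact_point by (metis disjoint_iff subsetD)
  then obtain b U V where sep: "\<And>g. g \<in> D \<Longrightarrow>
      C \<subseteq> U g \<and> g \<in> V g \<and> separating_element pl ng z (b g) (U g) (V g)"
    by metis
  obtain T where T: "T \<subseteq> D" "finite T" "D \<subseteq> (\<Union>t\<in>T. V t)"
    using compactE_image[OF assms(3), of D V] sep unfolding separating_element_def by blast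
  obtain a where a: "\<forall>h\<in>?M.
      ((\<exists>t\<in>T. h (b t) = 1) \<longrightarrow> h a = 1) \<and> ((\<forall>t\<in>T. h (b t) = 0) \<longrightarrow> h a = 0)"
    using MaxSpec_exists_join01[OF T(2), of pl ng z b] by blast
  have "open (U t)" "open (V t)" "\<forall>h\<in>U t \<inter> ?M. h (b t) = 0" "\<forall>h\<in>V t \<inter> ?M. h (b t) = 1"
    if "t \<in> T" for t
    using sep that T(1) unfolding separating_element_def by blast+
  note sepD = this
  have "\<forall>h\<in>(\<Union>t\<in>T. V t) \<inter> ?M. h a = 1"
  proof
    fix h assume "h \<in> (\<Union>t\<in>T. V t) \<inter> ?M"
    then obtain t where "t \<in> T" "h \<in> V t" "h \<in> ?M" by blast
    then show "h a = 1" using sepD(4) a by blast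
  qed
  moreover have "\<forall>h\<in>(\<Inter>t\<in>T. U t) \<inter> ?M. h a = 0" using sepD(3) a by blast
  ultimately have "separating_element pl ng z a (\<Inter>t\<in>T. U t) (\<Union>t\<in>T. V t)"
    unfolding separating_element_def using T(2) sepD(1,2) by auto
  moreover have "C \<subseteq> (\<Inter>t\<in>T. U t)" using T sep by blast
  ultimately show ?thesis using T(3) by blast
qed

lemma MaxSpec_urysohn:
  assumes "closedin (top_of_set (MaxSpec pl ng z)) C" "closedin (top_of_set (MaxSpec pl ng z)) D"
    and "C \<inter> D = {}"
  shows "\<exists>b. (\<forall>h\<in>C. h b = 0) \<and> (\<forall>h\<in>D. h b = 1)"
proof -
  have "compact C" "C \<subseteq> MaxSpec pl ng z" "compact D" "D \<subseteq> MaxSpec pl ng z"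
    using assms(1,2) closedin_compact[OF compact_MaxSpec[of pl ng z]] closedin_imp_subset
    by blast+
  then obtain b U V where "C \<subseteq> U" "D \<subseteq> V" "separating_element pl ng z b U V"
    using MaxSpec_separate_compact[of C pl ng z D] assms(3) by blast
  then show ?thesis using \<open>C \<subseteq> MaxSpec pl ng z\<close> \<open>D \<subseteq> MaxSpec pl ng z\<close>
    unfolding separating_element_def by blast
qed

lemma floor_double:
  fixes y :: real
  shows "\<lfloor>2 * y\<rfloor> = 2 * \<lfloor>y\<rfloor> + of_bool (odd \<lfloor>2 * y\<rfloor>)"
proof -
  have "2 * \<lfloor>y\<rfloor> \<le> \<lfloor>2 * y\<rfloor>" "\<lfloor>2 * y\<rfloor> \<le> 2 * \<lfloor>y\<rfloor> + 1" by linarith+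
  then consider "\<lfloor>2 * y\<rfloor> = 2 * \<lfloor>y\<rfloor>" | "\<lfloor>2 * y\<rfloor> = 2 * \<lfloor>y\<rfloor> + 1" by linarith
  then show ?thesis by cases simp_all
qed

lemma binary_digits_sums:
  fixes r :: real
  assumes "0 \<le> r" "r < 1"
  shows "(\<lambda>k. of_bool (odd \<lfloor>2^Suc k * r\<rfloor>) / 2^Suc k) sums r"
proof -
  let ?d = "\<lambda>k. of_bool (odd \<lfloor>2^Suc k * r\<rfloor>) / (2::real)^Suc k"
  have partial: "(\<Sum>k<N. ?d k) = of_int \<lfloor>2^N * r\<rfloor> / 2^N" for N
  proof (induction N)
    case 0
    then show ?case using assms by (simp add: floor_eq_iff)
  next
    case (Suc N)
    have "\<lfloor>2^Suc N * r\<rfloor> = 2 * \<lfloor>2^N * r\<rfloor> + of_bool (odd \<lfloor>2^Suc N * r\<rfloor>)"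
      using floor_double[of "2^N * r"] by (simp add: mult.assoc)
    from arg_cong[OF this, of "of_int :: int \<Rightarrow> real"]
    have "of_int \<lfloor>2^Suc N * r\<rfloor> = 2 * of_int \<lfloor>2^N * r\<rfloor> + ?d N * 2^Suc N"
      by simp
    then show ?case using Suc by (simp add: field_simps)
  qed
  have bound: "\<bar>r - of_int \<lfloor>2^N * r\<rfloor> / 2^N\<bar> \<le> 1 / 2^N" for N :: nat
  proof -
    have "r - of_int \<lfloor>2^N * r\<rfloor> / 2^N = (2^N * r - of_int \<lfloor>2^N * r\<rfloor>) / 2^N"
      by (simp add: field_simps)
    moreover have "\<bar>2^N * r - of_int \<lfloor>2^N * r\<rfloor>\<bar> \<le> 1" by linarith
    ultimately show ?thesis by (simp add: divide_right_mono)
  qed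
  have "(\<lambda>N. r - of_int \<lfloor>2^N * r\<rfloor> / 2^N) \<longlonglongrightarrow> 0"
  proof (rule Lim_null_comparison)
    show "\<forall>\<^sub>F N in sequentially. norm (r - of_int \<lfloor>2^N * r\<rfloor> / 2^N) \<le> 1 / (2::real)^N"
      using bound by (intro always_eventually allI) simp
    show "(\<lambda>N. 1 / (2::real)^N) \<longlonglongrightarrow> 0"
      by (rule LIMSEQ_divide_realpow_zero) simp
  qed
  then have "(\<lambda>N. r - (r - of_int \<lfloor>2^N * r\<rfloor> / (2::real)^N)) \<longlonglongrightarrow> r - 0"
    by (intro tendsto_diff tendsto_const)
  then have "(\<lambda>N. of_int \<lfloor>2^N * r\<rfloor> / (2::real)^N) \<longlonglongrightarrow> r" by simp
  then show ?thesis unfolding sums_def partial .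
qed

context
  fixes dl :: "(nat \<Rightarrow> 'a) \<Rightarrow> 'a" and pl ng z
  assumes delta: "delta_algebra dl pl ng z"
begin

lemma delta_dist_head:
  "mv_dist pl ng (dl x) (dl (\<lambda>i. if i = 0 then x 0 else z)) = dl (\<lambda>i. if i = 0 then z else x i)"
  using delta unfolding delta_algebra_def by blast

lemma delta_const: "dl (\<lambda>i. x) = x"
  using delta unfolding delta_algebra_def by blast

lemma delta_shift: "dl (\<lambda>i. if i = 0 then z else x (i - 1)) = dhalf dl z (dl x)"
  using delta unfolding delta_algebra_def by blast

lemma delta_mono: "mv_le pl ng (dl x) (dl (\<lambda>i. pl (x i) (y i)))"
  using delta unfolding delta_algebra_def by blast

lemma pl_zero: "pl a z = a" "pl z a = a"
  using delta unfolding delta_algebra_def mv_algebra_def by metis+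

text \<open>Axioms (i), (iii), (iv) give \<open>d(x, \<onehalf>x) = \<onehalf>x\<close> and (v) gives \<open>\<onehalf>x \<le> x\<close>; together they force
  the value \<open>h x / 2\<close>.\<close>

lemma MaxSpec_dhalf:
  assumes h: "h \<in> MaxSpec pl ng z"
  shows "h (dhalf dl z x) = h x / 2"
proof -
  have "mv_dist pl ng x (dhalf dl z x) = dhalf dl z x"
    using delta_dist_head[of "\<lambda>i. x"] delta_shift[of "\<lambda>i. x"] delta_const[of x]
    by (simp add: dhalf_def)
  then have dist: "\<bar>h x - h (dhalf dl z x)\<bar> = h (dhalf dl z x)"
    using MaxSpec_dist[OF h] by metis
  have sum: "(\<lambda>i. pl (if i = 0 then x else z) (if i = 0 then z else x)) = (\<lambda>i. x)"
    by (auto simp: pl_zero)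
  have "mv_le pl ng (dhalf dl z x) x"
    using delta_mono[of "\<lambda>i. if i = 0 then x else z" "\<lambda>i. if i = 0 then z else x"]
    unfolding sum delta_const dhalf_def .
  then have "h (dhalf dl z x) \<le> h x" by (rule MaxSpec_le[OF h])
  with dist show ?thesis by linarith
qed

lemma MaxSpec_delta_unfold:
  assumes h: "h \<in> MaxSpec pl ng z"
  shows "h (dl x) = h (x 0) / 2 + h (dl (\<lambda>i. x (Suc i))) / 2"
proof -
  have "(\<lambda>i. if i = 0 then z else x (Suc (i - 1))) = (\<lambda>i. if i = 0 then z else x i)"
    by (auto simp: fun_eq_iff)
  then have tail: "dl (\<lambda>i. if i = 0 then z else x i) = dhalf dl z (dl (\<lambda>i. x (Suc i)))"
    using delta_shift[of "\<lambda>i. x (Suc i)"] by simp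
  have "(\<lambda>i. pl (if i = 0 then x 0 else z) (if i = 0 then z else x i)) = x"
    by (auto simp: pl_zero fun_eq_iff)
  then have "mv_le pl ng (dhalf dl z (x 0)) (dl x)"
    using delta_mono[of "\<lambda>i. if i = 0 then x 0 else z" "\<lambda>i. if i = 0 then z else x i"]
    by (simp add: dhalf_def)
  then have le: "h (x 0) / 2 \<le> h (dl x)"
    using MaxSpec_le[OF h] MaxSpec_dhalf[OF h] by metis
  have "\<bar>h (dl x) - h (x 0) / 2\<bar> = h (dl (\<lambda>i. x (Suc i))) / 2"
    using delta_dist_head[of x] tail MaxSpec_dist[OF h] MaxSpec_dhalf[OF h] by (metis dhalf_def)
  with le show ?thesis by linarith
qed

lemma MaxSpec_delta_sums:
  assumes h: "h \<in> MaxSpec pl ng z"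
  shows "(\<lambda>k. h (x k) / 2^Suc k) sums h (dl x)"
proof -
  have partial: "h (dl x) = (\<Sum>k<N. h (x k) / 2^Suc k) + h (dl (\<lambda>i. x (i + N))) / 2^N" for N
  proof (induction N)
    case (Suc N)
    then show ?case
      using MaxSpec_delta_unfold[OF h, of "\<lambda>i. x (i + N)"] by (simp add: field_simps)
  qed simp
  have "(\<lambda>N. h (dl (\<lambda>i. x (i + N))) / 2^N) \<longlonglongrightarrow> 0"
  proof (rule Lim_null_comparison)
    show "\<forall>\<^sub>F N in sequentially. norm (h (dl (\<lambda>i. x (i + N))) / 2^N) \<le> 1 / (2::real)^N"
      using MaxSpecD(1,2)[OF h] by (intro always_eventually allI) (simp add: divide_right_mono)
    show "(\<lambda>N. 1 / (2::real)^N) \<longlonglongrightarrow> 0"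
      by (rule LIMSEQ_divide_realpow_zero) simp
  qed
  then have "(\<lambda>N. h (dl x) - h (dl (\<lambda>i. x (i + N))) / 2^N) \<longlonglongrightarrow> h (dl x) - 0"
    by (intro tendsto_diff tendsto_const)
  moreover have "h (dl x) - h (dl (\<lambda>i. x (i + N))) / 2^N = (\<Sum>k<N. h (x k) / 2^Suc k)" for N
    using partial[of N] by linarith
  ultimately show ?thesis unfolding sums_def by simp
qed

lemma MaxSpec_exists_scaled:
  assumes "0 \<le> r" "r \<le> 1"
  shows "\<exists>e. \<forall>h\<in>MaxSpec pl ng z. h e = r * h b"
proof (cases "r = 1")
  case True
  then show ?thesis by auto
next
  case False
  with assms(2) have r_less: "r < 1" by simp
  let ?\<beta> = "\<lambda>k. odd \<lfloor>2^Suc k * r\<rfloor>"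
  show ?thesis
  proof (intro exI[of _ "dl (\<lambda>k. if ?\<beta> k then b else z)"] ballI)
    fix h assume h: "h \<in> MaxSpec pl ng z"
    have "(\<lambda>k. h (if ?\<beta> k then b else z) / 2^Suc k) = (\<lambda>k. of_bool (?\<beta> k) / 2^Suc k * h b)"
      using MaxSpecD(3)[OF h] by auto
    then have "(\<lambda>k. of_bool (?\<beta> k) / 2^Suc k * h b) sums h (dl (\<lambda>k. if ?\<beta> k then b else z))"
      using MaxSpec_delta_sums[OF h, of "\<lambda>k. if ?\<beta> k then b else z"] by simp
    moreover have "(\<lambda>k. of_bool (?\<beta> k) / 2^Suc k * h b) sums (r * h b)"
      using sums_mult2[OF binary_digits_sums[OF assms(1) r_less], of "h b"] .
    ultimately show "h (dl (\<lambda>k. if ?\<beta> k then b else z)) = r * h b"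
      by (rule sums_unique2)
  qed
qed

lemma exists_value_on_closed:
  assumes "closedin (top_of_set (MaxSpec pl ng z)) C" "closedin (top_of_set (MaxSpec pl ng z)) D"
    and "C \<inter> D = {}" "0 \<le> r" "r \<le> 1"
  shows "\<exists>e. (\<forall>h\<in>C. h e = r) \<and> (\<forall>h\<in>D. h e = 0)"
proof -
  obtain b where b: "\<forall>h\<in>D. h b = 0" "\<forall>h\<in>C. h b = 1"
    using MaxSpec_urysohn[OF assms(2,1)] assms(3) by blast
  obtain e where "\<forall>h\<in>MaxSpec pl ng z. h e = r * h b"
    using MaxSpec_exists_scaled[OF assms(4,5)] by blast
  then show ?thesis
    using b assms(1,2) closedin_imp_subset by (metis in_mono mult_1_right mult_zero_right)
qed

end

theorem mainTheorem5:
  fixes dl :: "(nat \<Rightarrow> 'a) \<Rightarrow> 'a" and pl :: "'a \<Rightarrow> 'a \<Rightarrow> 'a"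
    and ng :: "'a \<Rightarrow> 'a" and z :: 'a
    and n :: nat and C :: "nat \<Rightarrow> ('a \<Rightarrow> real) set" and r :: "nat \<Rightarrow> real"
  assumes "delta_algebra dl pl ng z"
    and "\<And>i. i \<in> {1..n} \<Longrightarrow> closedin (top_of_set (MaxSpec pl ng z)) (C i)"
    and "\<And>i j. i \<in> {1..n} \<Longrightarrow> j \<in> {1..n} \<Longrightarrow> i \<noteq> j \<Longrightarrow> C i \<inter> C j = {}"
    and "\<And>i. i \<in> {1..n} \<Longrightarrow> r i \<in> {0..1}"
  shows "\<exists>a. \<forall>i\<in>{1..n}. \<forall>h\<in>C i. h a = r i"
proof -
  have "\<exists>e. (\<forall>h\<in>C i. h e = r i) \<and> (\<forall>h\<in>\<Union>(C ` ({1..n} - {i})). h e = 0)"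
    if i: "i \<in> {1..n}" for i
  proof (rule exists_value_on_closed[OF assms(1) assms(2)[OF i]])
    show "closedin (top_of_set (MaxSpec pl ng z)) (\<Union>(C ` ({1..n} - {i})))"
      using assms(2) by (intro closedin_Union) auto
    show "C i \<inter> \<Union>(C ` ({1..n} - {i})) = {}" using assms(3) i by blast
    show "0 \<le> r i" "r i \<le> 1" using assms(4)[OF i] by auto
  qed
  then obtain e where e: "\<And>i. i \<in> {1..n} \<Longrightarrow>
      (\<forall>h\<in>C i. h (e i) = r i) \<and> (\<forall>h\<in>\<Union>(C ` ({1..n} - {i})). h (e i) = 0)"
    by metis
  obtain a where a: "\<forall>h\<in>MaxSpec pl ng z. h a = min 1 (\<Sum>j\<in>{1..n}. h (e j))"
    using MaxSpec_exists_sum[of "{1..n}" pl ng z e] by blast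
  have "h a = r i" if i: "i \<in> {1..n}" and h: "h \<in> C i" for i h
  proof -
    have "h (e j) = 0" if "j \<in> {1..n} - {i}" for j using e[of j] that i h by blast
    then have "(\<Sum>j\<in>{1..n}. h (e j)) = (\<Sum>j\<in>{i}. h (e j))"
      using i by (intro sum.mono_neutral_right) auto
    then have "(\<Sum>j\<in>{1..n}. h (e j)) = r i" using e[OF i] h by simp
    moreover have "h \<in> MaxSpec pl ng z" using h closedin_imp_subset[OF assms(2)[OF i]] by blast
    then have "h a = min 1 (\<Sum>j\<in>{1..n}. h (e j))" using a by blast
    ultimately show ?thesis using assms(4)[OF i] by simp
  qed
  then show ?thesis by blast
qed

end
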